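(* Let $s\in\mathbb N$, $2\le q\le s$, let $c\in\mathbb R^s$ be a node vector with distinct entries, $C:=\mathrm{diag}(c_1,\dots,c_s)$, and let $A,B\in\mathbb R^{s\times s}$ and a diagonal matrix $K=\mathrm{diag}(\kappa_{11},\dots,\kappa_{ss})$ satisfy $AV_s=BV_s\mathcal P_s^{-1}+KV_s\tilde E_s$, so that $$\mathcal Q_{q,s}:=V_q^{\mathsf T}BV_s\mathcal P_s^{-1}=V_q^{\mathsf T}(AV_s-KV_s\tilde E_s).$$ (a) $\mathcal Q_{q,s}$ has Hankel form if and only if $V_{q-1}^{\mathsf T}(AC-CA-K)V_{s-1}=0$. (b) If $q=3$, $s=4$, $A$ is lower triangular and $\mathcal Q_{3,4}$ has Hankel form, then $\kappa_{33}=e_3^{\mathsf T}Ke_3=0$.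
   Context: $V_k:=(\mathbb 1,c,c^2,\dots,c^{k-1})\in\mathbb R^{s\times k}$ (componentwise powers), $\mathcal P_k:=\big(\binom{j-1}{i-1}\big)_{i,j=1}^k$, $\tilde E_k:=(i\,\delta_{i+1,j})_{i,j=1}^k$, $e_3$ the third cardinal basis vector. A matrix $X=(x_{ij})$ has Hankel form if $x_{ij}$ depends only on $i+j$. *)

theory Defs
  imports Complex_Main "Jordan_Normal_Form.Matrix"
begin

(* All indices are 0-based: row/column i here corresponds to i+1 in the paper. *)

definition vander :: "real vec \<Rightarrow> nat \<Rightarrow> real mat" where
  "vander c k = mat (dim_vec c) k (\<lambda>(i,j). (c $ i) ^ j)"

definition pascal :: "nat \<Rightarrow> real mat" where
  "pascal k = mat k k (\<lambda>(i,j). real (j choose i))"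

definition shiftE :: "nat \<Rightarrow> real mat" where
  "shiftE k = mat k k (\<lambda>(i,j). if j = i + 1 then real (i + 1) else 0)"

definition mat_inv :: "real mat \<Rightarrow> real mat" where
  "mat_inv M = (SOME N. N \<in> carrier_mat (dim_row M) (dim_row M) \<and>
                        N * M = 1\<^sub>m (dim_row M) \<and> M * N = 1\<^sub>m (dim_row M))"

definition hankel :: "'a mat \<Rightarrow> bool" where
  "hankel X \<longleftrightarrow> (\<forall>i j i' j'. i < dim_row X \<longrightarrow> j < dim_col X \<longrightarrow>
      i' < dim_row X \<longrightarrow> j' < dim_col X \<longrightarrow> i + j = i' + j' \<longrightarrow> X $$ (i,j) = X $$ (i',j'))"

definition lower_triangular :: "'a::zero mat \<Rightarrow> bool" where
  "lower_triangular A \<longleftrightarrow> (\<forall>i < dim_row A. \<forall>j < dim_col A. i < j \<longrightarrow> A $$ (i,j) = 0)"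

end

(* The hypothesis gives Q = V_q^T W with W = A V - K V E. Entry (i, j) of Q pairs the i-th powers
   of the nodes with column j of W, so the Hankel condition Q(i, j+1) = Q(i+1, j) says that
   V_(q-1)^T annihilates the columns W(j+1) - C W(j). Since column j+1 of V is C times column j,
   and column j of K V E is j K c^(j-1), these columns are exactly (A C - C A - K) V(j): this is (a).
   For (b), the vanishing form V_2^T M V_3 with M = A C - C A - K is tested against polynomials:
   M is lower triangular with diagonal -K, and suitable test polynomials isolate M(2,2). *)
theory Submission
  imports Defs "Jordan_Normal_Form.Determinant"
begin

lemma mat_inv_carrier:
  fixes M :: "real mat"
  assumes M: "M \<in> carrier_mat n n" and det: "det M \<noteq> 0"
  shows "mat_inv M \<in> carrier_mat n n"
proof -
  have "\<exists>N. N \<in> carrier_mat n n \<and> N * M = 1\<^sub>m n \<and> M * N = 1\<^sub>m n"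
    using det_non_zero_imp_unit[OF M det, of undefined] by (auto simp: Units_def ring_mat_def)
  then show ?thesis
    using someI_ex[of "\<lambda>N. N \<in> carrier_mat n n \<and> N * M = 1\<^sub>m n \<and> M * N = 1\<^sub>m n"] M
    unfolding mat_inv_def by auto
qed

lemma det_pascal: "det (pascal n) = 1"
proof -
  have "upper_triangular (pascal n)"
    by (auto simp: upper_triangular_def pascal_def)
  then have "det (pascal n) = prod_list (diag_mat (pascal n))"
    by (rule det_upper_triangular[of _ n]) (simp add: pascal_def)
  also have "\<dots> = 1"
    unfolding prod_list_diag_prod by (simp add: pascal_def)
  finally show ?thesis .
qed

lemma hankel_iff_adjacent:
  "hankel X \<longleftrightarrow>
    (\<forall>i j. i + 1 < dim_row X \<longrightarrow> j + 1 < dim_col X \<longrightarrow> X $$ (i, j + 1) = X $$ (i + 1, j))"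
proof
  assume "hankel X"
  then show "\<forall>i j. i + 1 < dim_row X \<longrightarrow> j + 1 < dim_col X \<longrightarrow> X $$ (i, j + 1) = X $$ (i + 1, j)"
    unfolding hankel_def by auto
next
  assume adj: "\<forall>i j. i + 1 < dim_row X \<longrightarrow> j + 1 < dim_col X \<longrightarrow> X $$ (i, j + 1) = X $$ (i + 1, j)"
  have along_antidiagonal: "X $$ (i, j) = X $$ (i + d, j - d)"
    if "i + d < dim_row X" "j < dim_col X" "d \<le> j" for i j d
    using that
  proof (induction d)
    case 0
    then show ?case by simp
  next
    case (Suc d)
    have "X $$ (i, j) = X $$ (i + d, j - d)"
      using Suc by simp
    also have "\<dots> = X $$ (i + d + 1, j - Suc d)"
    proof -
      have "j - d = (j - Suc d) + 1" "i + d + 1 < dim_row X" "j - Suc d + 1 < dim_col X"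
        using Suc.prems by auto
      then show ?thesis using adj by metis
    qed
    finally show ?case by simp
  qed
  show "hankel X"
    unfolding hankel_def
  proof (intro allI impI)
    fix i j i' j'
    assume ij: "i < dim_row X" "j < dim_col X" "i' < dim_row X" "j' < dim_col X" "i + j = i' + j'"
    show "X $$ (i, j) = X $$ (i', j')"
    proof (cases "i \<le> i'")
      case True
      then have "i + (i' - i) = i'" "i' - i \<le> j" "j - (i' - i) = j'"
        using ij(5) by arith+
      then show ?thesis using along_antidiagonal[of i "i' - i" j] ij by simp
    next
      case False
      then have "i' + (i - i') = i" "i - i' \<le> j'" "j' - (i - i') = j"
        using ij(5) by arith+
      then show ?thesis using along_antidiagonal[of i' "i - i'" j'] ij by simp
    qed
  qed
qed

lemma vander_carrier [simp]: "vander c n \<in> carrier_mat (dim_vec c) n"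
  by (simp add: vander_def)

lemma index_transpose_vander_mult:
  assumes "X \<in> carrier_mat (dim_vec c) n" "i < q" "j < n"
  shows "(transpose_mat (vander c q) * X) $$ (i, j) = (\<Sum>k<dim_vec c. c $ k ^ i * X $$ (k, j))"
  using assms by (simp add: vander_def scalar_prod_def atLeast0LessThan)

lemma index_mult_vander:
  assumes "X \<in> carrier_mat r (dim_vec c)" "i < r" "j < n"
  shows "(X * vander c n) $$ (i, j) = (\<Sum>m<dim_vec c. X $$ (i, m) * c $ m ^ j)"
  using assms by (simp add: vander_def scalar_prod_def atLeast0LessThan)

lemma index_transpose_vander_mult_vander:
  assumes "M \<in> carrier_mat (dim_vec c) (dim_vec c)" "i < p" "j < n"
  shows "(transpose_mat (vander c p) * M * vander c n) $$ (i, j)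
       = (\<Sum>k<dim_vec c. \<Sum>m<dim_vec c. c $ k ^ i * M $$ (k, m) * c $ m ^ j)"
proof -
  have "transpose_mat (vander c p) \<in> carrier_mat p (dim_vec c)"
    by simp
  then have "transpose_mat (vander c p) * M * vander c n = transpose_mat (vander c p) * (M * vander c n)"
    using assoc_mult_mat assms(1) vander_carrier by blast
  also have "(transpose_mat (vander c p) * (M * vander c n)) $$ (i, j)
      = (\<Sum>k<dim_vec c. c $ k ^ i * (M * vander c n) $$ (k, j))"
    using assms by (intro index_transpose_vander_mult) auto
  also have "\<dots> = (\<Sum>k<dim_vec c. c $ k ^ i * (\<Sum>m<dim_vec c. M $$ (k, m) * c $ m ^ j))"
    using assms by (intro sum.cong) (auto simp: index_mult_vander)
  finally show ?thesis
    by (simp add: sum_distrib_left mult.assoc)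
qed

lemma index_diagonal_mult:
  assumes "diagonal_mat D" "D \<in> carrier_mat n n" "X \<in> carrier_mat n m" "i < n" "j < m"
  shows "(D * X) $$ (i, j) = D $$ (i, i) * X $$ (i, j)"
proof -
  have "(D * X) $$ (i, j) = (\<Sum>k<n. D $$ (i, k) * X $$ (k, j))"
    using assms by (simp add: scalar_prod_def atLeast0LessThan)
  also have "\<dots> = (\<Sum>k<n. if k = i then D $$ (i, i) * X $$ (i, j) else 0)"
    using assms by (intro sum.cong) (auto simp: diagonal_mat_def)
  finally show ?thesis
    using assms(4) by simp
qed

lemma index_mult_shiftE:
  assumes "X \<in> carrier_mat r n" "i < r" "j < n"
  shows "(X * shiftE n) $$ (i, j) = (if j = 0 then 0 else real j * X $$ (i, j - 1))"
proof -
  have "(X * shiftE n) $$ (i, j) = (\<Sum>l<n. X $$ (i, l) * (if j = l + 1 then real (l + 1) else 0))"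
    using assms by (simp add: shiftE_def scalar_prod_def atLeast0LessThan)
  also have "\<dots> = (\<Sum>l<n. if l = j - 1 \<and> j \<noteq> 0 then real j * X $$ (i, j - 1) else 0)"
    by (intro sum.cong) auto
  finally show ?thesis
    using assms(3) by simp
qed

lemma index_commutator_diag_minus:
  fixes A K :: "'a :: comm_ring_1 mat"
  assumes "A \<in> carrier_mat n n" "K \<in> carrier_mat n n" "k < n" "m < n"
  shows "(A * mat_diag n d - mat_diag n d * A - K) $$ (k, m) = (d m - d k) * A $$ (k, m) - K $$ (k, m)"
  using assms by (simp add: mat_diag_mult_left[OF assms(1)] mat_diag_mult_right[OF assms(1)] algebra_simps)

lemma hankel_transpose_vander_mult_iff:
  assumes W: "W \<in> carrier_mat (dim_vec c) n" and R: "R \<in> carrier_mat (dim_vec c) (n - 1)"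
    and R_index: "\<And>k j. k < dim_vec c \<Longrightarrow> j + 1 < n \<Longrightarrow> R $$ (k, j) = W $$ (k, j + 1) - c $ k * W $$ (k, j)"
  shows "hankel (transpose_mat (vander c q) * W) \<longleftrightarrow>
    transpose_mat (vander c (q - 1)) * R = 0\<^sub>m (q - 1) (n - 1)"
proof -
  let ?Q = "transpose_mat (vander c q) * W" and ?N = "transpose_mat (vander c (q - 1)) * R"
  have adjacent_diff: "?Q $$ (i, j + 1) - ?Q $$ (i + 1, j) = ?N $$ (i, j)"
    if "i + 1 < q" "j + 1 < n" for i j
  proof -
    have "?Q $$ (i, j + 1) - ?Q $$ (i + 1, j)
        = (\<Sum>k<dim_vec c. c $ k ^ i * (W $$ (k, j + 1) - c $ k * W $$ (k, j)))"
      using that W by (simp add: index_transpose_vander_mult sum_subtractf algebra_simps)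
    also have "\<dots> = ?N $$ (i, j)"
      using that R by (simp add: index_transpose_vander_mult R_index)
    finally show ?thesis .
  qed
  have dim_Q: "dim_row ?Q = q" "dim_col ?Q = n"
    using W by (auto simp: vander_def)
  have "hankel ?Q \<longleftrightarrow> (\<forall>i j. i + 1 < q \<longrightarrow> j + 1 < n \<longrightarrow> ?Q $$ (i, j + 1) = ?Q $$ (i + 1, j))"
    unfolding hankel_iff_adjacent dim_Q ..
  also have "\<dots> \<longleftrightarrow> (\<forall>i j. i + 1 < q \<longrightarrow> j + 1 < n \<longrightarrow> ?N $$ (i, j) = 0)"
    using adjacent_diff by (metis eq_iff_diff_eq_0)
  also have "\<dots> \<longleftrightarrow> ?N = 0\<^sub>m (q - 1) (n - 1)"
  proof
    assume "\<forall>i j. i + 1 < q \<longrightarrow> j + 1 < n \<longrightarrow> ?N $$ (i, j) = 0"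
    moreover have "?N \<in> carrier_mat (q - 1) (n - 1)"
      using R mult_carrier_mat transpose_carrier_mat vander_carrier by metis
    ultimately show "?N = 0\<^sub>m (q - 1) (n - 1)"
      by (intro eq_matI) (auto simp: less_diff_conv)
  qed (simp add: less_diff_conv)
  finally show ?thesis .
qed

lemma lower_triangular_commutator_diag_minus:
  fixes A K :: "'a :: comm_ring_1 mat"
  assumes A: "A \<in> carrier_mat n n" and K: "K \<in> carrier_mat n n"
    and low: "lower_triangular A" and diag: "diagonal_mat K"
  shows "lower_triangular (A * mat_diag n d - mat_diag n d * A - K)"
  unfolding lower_triangular_def
proof (intro allI impI)
  fix i j
  assume "i < dim_row (A * mat_diag n d - mat_diag n d * A - K)"
    and "j < dim_col (A * mat_diag n d - mat_diag n d * A - K)" and "i < j"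
  with A K have ij: "i < n" "j < n" "i < j"
    by auto
  then have "A $$ (i, j) = 0" "K $$ (i, j) = 0"
    using low diag A K unfolding lower_triangular_def diagonal_mat_def by auto
  then show "(A * mat_diag n d - mat_diag n d * A - K) $$ (i, j) = 0"
    by (simp only: index_commutator_diag_minus[OF A K ij(1,2)]) simp
qed

lemma index_commutator_mult_vander:
  fixes A K :: "real mat"
  assumes A: "A \<in> carrier_mat s s" and K: "K \<in> carrier_mat s s" and diag: "diagonal_mat K"
    and c: "dim_vec c = s" and k: "k < s" and j: "j + 1 < s"
  defines "W \<equiv> A * vander c s - K * vander c s * shiftE s"
  shows "((A * mat_diag s (\<lambda>i. c $ i) - mat_diag s (\<lambda>i. c $ i) * A - K) * vander c (s - 1)) $$ (k, j)
       = W $$ (k, j + 1) - c $ k * W $$ (k, j)"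
proof -
  have V: "vander c s \<in> carrier_mat s s"
    using c vander_carrier by metis
  have KV: "(K * vander c s) $$ (k, l) = K $$ (k, k) * c $ k ^ l" if "l < s" for l
    using index_diagonal_mult[OF diag K V k that] c k that by (simp add: vander_def)
  have W_index: "W $$ (k, l) = (\<Sum>m<s. A $$ (k, m) * c $ m ^ l)
      - (if l = 0 then 0 else real l * K $$ (k, k) * c $ k ^ (l - 1))" if l: "l < s" for l
  proof -
    have "W $$ (k, l) = (A * vander c s) $$ (k, l) - (K * vander c s * shiftE s) $$ (k, l)"
      unfolding W_def by (rule index_minus_mat(1)) (use K k l in \<open>simp_all add: shiftE_def\<close>)
    also have "(A * vander c s) $$ (k, l) = (\<Sum>m<s. A $$ (k, m) * c $ m ^ l)"
      using index_mult_vander[of A s c k l s] A c k l by simp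
    also have "(K * vander c s * shiftE s) $$ (k, l)
        = (if l = 0 then 0 else real l * (K * vander c s) $$ (k, l - 1))"
      using K V k l by (intro index_mult_shiftE) auto
    finally show ?thesis
      using KV l by (simp del: index_mult_mat)
  qed
  have K_row: "(\<Sum>m<s. K $$ (k, m) * c $ m ^ j) = K $$ (k, k) * c $ k ^ j"
    using index_mult_vander[of K s c k j s] KV[of j] K c k j by simp
  let ?M = "A * mat_diag s (\<lambda>i. c $ i) - mat_diag s (\<lambda>i. c $ i) * A - K"
  have "?M \<in> carrier_mat s s"
    using A K by auto
  then have "(?M * vander c (s - 1)) $$ (k, j) = (\<Sum>m<s. ?M $$ (k, m) * c $ m ^ j)"
    using index_mult_vander[of ?M s c k j "s - 1"] c k j by simp
  also have "\<dots> = (\<Sum>m<s. ((c $ m - c $ k) * A $$ (k, m) - K $$ (k, m)) * c $ m ^ j)"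
    by (intro sum.cong refl) (subst index_commutator_diag_minus[OF A K k], simp_all)
  also have "\<dots> = (\<Sum>m<s. A $$ (k, m) * c $ m ^ (j + 1)) - c $ k * (\<Sum>m<s. A $$ (k, m) * c $ m ^ j)
      - K $$ (k, k) * c $ k ^ j"
    by (simp add: K_row[symmetric] sum_subtractf sum.distrib sum_distrib_left algebra_simps)
  also have "\<dots> = W $$ (k, j + 1) - c $ k * W $$ (k, j)"
    using j by (cases j) (simp_all add: W_index algebra_simps)
  finally show ?thesis .
qed

lemma transpose_vander_mult_eq_of_relation:
  fixes A B K :: "real mat"
  assumes A: "A \<in> carrier_mat s s" and B: "B \<in> carrier_mat s s" and K: "K \<in> carrier_mat s s"
    and c: "dim_vec c = s"
    and relation: "A * vander c s = B * vander c s * mat_inv (pascal s) + K * vander c s * shiftE s"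
  shows "transpose_mat (vander c q) * B * vander c s * mat_inv (pascal s)
       = transpose_mat (vander c q) * (A * vander c s - K * vander c s * shiftE s)"
proof -
  let ?V = "vander c s" and ?P = "mat_inv (pascal s)" and ?E = "shiftE s"
  have V: "?V \<in> carrier_mat s s"
    using c vander_carrier by metis
  have "pascal s \<in> carrier_mat s s"
    by (simp add: pascal_def)
  then have P: "?P \<in> carrier_mat s s"
    using mat_inv_carrier det_pascal by simp
  have E: "?E \<in> carrier_mat s s"
    by (simp add: shiftE_def)
  have Vq: "transpose_mat (vander c q) \<in> carrier_mat q s"
    using c by (simp add: vander_def)
  have "B * ?V * ?P = A * ?V - K * ?V * ?E"
  proof (rule eq_matI)
    fix i j
    assume "i < dim_row (A * ?V - K * ?V * ?E)" "j < dim_col (A * ?V - K * ?V * ?E)"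
    with A K E have ij: "i < s" "j < s"
      by auto
    then have "(A * ?V) $$ (i, j) = (B * ?V * ?P) $$ (i, j) + (K * ?V * ?E) $$ (i, j)"
      using relation B K V P E by simp
    then show "(B * ?V * ?P) $$ (i, j) = (A * ?V - K * ?V * ?E) $$ (i, j)"
      using ij K V E by simp
  qed (use A B K V P E in auto)
  then show ?thesis
    using assoc_mult_mat[OF Vq B V] assoc_mult_mat[OF Vq mult_carrier_mat[OF B V] P] by simp
qed

lemma hankel_transpose_vander_mult_iff_commutator:
  fixes A K :: "real mat"
  assumes A: "A \<in> carrier_mat s s" and K: "K \<in> carrier_mat s s" and diag: "diagonal_mat K"
    and c: "dim_vec c = s"
  shows "hankel (transpose_mat (vander c q) * (A * vander c s - K * vander c s * shiftE s)) \<longleftrightarrow>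
    transpose_mat (vander c (q - 1)) * (A * mat_diag s (\<lambda>i. c $ i) - mat_diag s (\<lambda>i. c $ i) * A - K)
      * vander c (s - 1) = 0\<^sub>m (q - 1) (s - 1)"
proof -
  let ?W = "A * vander c s - K * vander c s * shiftE s"
  let ?M = "A * mat_diag s (\<lambda>i. c $ i) - mat_diag s (\<lambda>i. c $ i) * A - K"
  have M: "?M \<in> carrier_mat s s"
    using A K by auto
  have "transpose_mat (vander c (q - 1)) \<in> carrier_mat (q - 1) s"
    using c by (simp add: vander_def)
  then have assoc: "transpose_mat (vander c (q - 1)) * ?M * vander c (s - 1)
      = transpose_mat (vander c (q - 1)) * (?M * vander c (s - 1))"
    using assoc_mult_mat M vander_carrier c by metis
  have "hankel (transpose_mat (vander c q) * ?W)
      \<longleftrightarrow> transpose_mat (vander c (q - 1)) * (?M * vander c (s - 1)) = 0\<^sub>m (q - 1) (s - 1)"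
  proof (rule hankel_transpose_vander_mult_iff)
    show "?W \<in> carrier_mat (dim_vec c) s" "?M * vander c (s - 1) \<in> carrier_mat (dim_vec c) (s - 1)"
      using A K M c by (auto simp: shiftE_def)
    show "(?M * vander c (s - 1)) $$ (k, j) = ?W $$ (k, j + 1) - c $ k * ?W $$ (k, j)"
      if "k < dim_vec c" "j + 1 < s" for k j
      using index_commutator_mult_vander[OF A K diag c] that c by simp
  qed
  then show ?thesis
    unfolding assoc .
qed

lemma lower_triangular_vander_form_zero_imp_entry_22:
  fixes M :: "real mat"
  assumes M: "M \<in> carrier_mat 4 4" and low: "lower_triangular M" and c: "dim_vec c = 4"
    and distinct: "c $ 2 \<noteq> c $ 0" "c $ 2 \<noteq> c $ 1" "c $ 2 \<noteq> c $ 3"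
    and zero: "transpose_mat (vander c 2) * M * vander c 3 = 0\<^sub>m 2 3"
  shows "M $$ (2, 2) = 0"
proof -
  define F where "F i j = (\<Sum>k<4. \<Sum>m<4. c $ k ^ i * M $$ (k, m) * c $ m ^ j)" for i j :: nat
  have F_zero: "F i j = 0" if "i < 2" "j < 3" for i j
    using index_transpose_vander_mult_vander[of M c i 2 j 3] zero M c that
    by (simp add: F_def)
  have upper_zero: "M $$ (k, m) = 0" if "k < m" "m < 4" for k m
    using low M that unfolding lower_triangular_def by auto
  \<comment> \<open>Sum of p(c k) M(k,m) r(c m) with p = x - c 3 and r = (x - c 0)(x - c 1): r kills
    the columns 0 and 1, triangularity then leaves the rows 2 and 3, and p kills row 3.\<close>
  have "(c $ 2 - c $ 3) * (c $ 2 - c $ 0) * (c $ 2 - c $ 1) * M $$ (2, 2)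
      = F 1 2 - (c $ 0 + c $ 1) * F 1 1 + c $ 0 * c $ 1 * F 1 0
        - c $ 3 * (F 0 2 - (c $ 0 + c $ 1) * F 0 1 + c $ 0 * c $ 1 * F 0 0)"
    unfolding F_def by (simp add: eval_nat_numeral upper_zero power2_eq_square algebra_simps)
  also have "\<dots> = 0"
    by (simp add: F_zero)
  finally show ?thesis
    using distinct by simp
qed

theorem theorem6p1:
  fixes s q :: nat and c :: "real vec" and A B K :: "real mat"
  assumes "2 \<le> q" and "q \<le> s"
    and "dim_vec c = s"
    and "\<forall>i<s. \<forall>j<s. i \<noteq> j \<longrightarrow> c $ i \<noteq> c $ j"
    and "A \<in> carrier_mat s s" and "B \<in> carrier_mat s s" and "K \<in> carrier_mat s s"
    and "diagonal_mat K"
    and "A * vander c s = B * vander c s * mat_inv (pascal s) + K * vander c s * shiftE s"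
  shows "(hankel (transpose_mat (vander c q) * B * vander c s * mat_inv (pascal s)) \<longleftrightarrow>
            transpose_mat (vander c (q - 1)) * (A * mat_diag s (\<lambda>i. c $ i) - mat_diag s (\<lambda>i. c $ i) * A - K)
              * vander c (s - 1) = 0\<^sub>m (q - 1) (s - 1))
         \<and> (q = 3 \<and> s = 4 \<and> lower_triangular A \<and>
            hankel (transpose_mat (vander c q) * B * vander c s * mat_inv (pascal s))
            \<longrightarrow> K $$ (2,2) = 0)"
proof -
  note c = assms(3) and distinct = assms(4) and A = assms(5) and K = assms(7) and diag = assms(8)
  let ?M = "A * mat_diag s (\<lambda>i. c $ i) - mat_diag s (\<lambda>i. c $ i) * A - K"
  have part_a: "hankel (transpose_mat (vander c q) * B * vander c s * mat_inv (pascal s)) \<longleftrightarrow>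
      transpose_mat (vander c (q - 1)) * ?M * vander c (s - 1) = 0\<^sub>m (q - 1) (s - 1)"
    unfolding transpose_vander_mult_eq_of_relation[OF A assms(6) K c assms(9)]
    by (rule hankel_transpose_vander_mult_iff_commutator[OF A K diag c])
  moreover have "K $$ (2, 2) = 0"
    if "q = 3" "s = 4" "lower_triangular A" "hankel (transpose_mat (vander c q) * B * vander c s * mat_inv (pascal s))"
  proof -
    have "?M $$ (2, 2) = 0"
    proof (rule lower_triangular_vander_form_zero_imp_entry_22)
      show "?M \<in> carrier_mat 4 4" "lower_triangular ?M"
        using A K diag that lower_triangular_commutator_diag_minus by auto
      show "transpose_mat (vander c 2) * ?M * vander c 3 = 0\<^sub>m 2 3"
        using part_a that by simp
    qed (use c distinct that in auto)
    then show ?thesis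
      using index_commutator_diag_minus[OF A K, of 2 2] that by simp
  qed
  ultimately show ?thesis
    by blast
qed

end
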